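(* Let $f:\mathbb{R}\to\mathbb{R}$ be continuous, and let $(x_n)_{n\in\mathbb{N}}\subseteq\mathcal{E}$ and $x\in\mathcal{E}$ with $x_n\to x$ in unbounded order (uo). Then $f\circ x_n\to f\circ x$ in unbounded order in $\mathcal{E}^u$.
   Context: Let $\mathcal{E}$ be an order complete vector lattice with a weak order unit $E$, $K$ its Stone space (extremally disconnected compact Hausdorff), and $C^\infty(K)$ the vector lattice of continuous functions $K\to[-\infty,\infty]$ finite off a nowhere dense set (identified when equal off a nowhere dense set), which is the universal completion $\mathcal{E}^u$. Fix a Maeda–Ogasawara representation of $\mathcal{E}$ as an order dense ideal of $C^\infty(K)$ with $E$ corresponding to $\mathbf{1}$. For continuous $f:\mathbb{R}\to\mathbb{R}$ and $X\in C^\infty(K)$, $f\circ X$ denotes the unique element of $C^\infty(K)$ agreeing with $\omega\mapsto f(X(\omega))$ on the open dense set where $X$ is finite (by the paper's main theorem, this coincides with the Daniell functional calculus $f(X)$). A sequence $(y_n)$ in a vector lattice $F$ converges in unbounded order (uo) to $y$ if $|y_n-y|\wedge u\to0$ in order for every $u\in F_+$. *)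

theory Defs
  imports "HOL-Analysis.Analysis"
begin

text \<open>The Stone space K is modelled as a type 'a with its topology (class t2_space),
  assumed compact and extremally disconnected.\<close>

definition extremally_disconnected :: "'a::topological_space itself \<Rightarrow> bool" where
  "extremally_disconnected _ \<longleftrightarrow> (\<forall>U::'a set. open U \<longrightarrow> open (closure U))"

definition nowhere_dense :: "'a::topological_space set \<Rightarrow> bool" where
  "nowhere_dense S \<longleftrightarrow> interior (closure S) = {}"

text \<open>Two continuous functions agreeing off a nowhere dense set agree everywhere (K, ereal Hausdorff),
  so the identification in the paper is trivial on this set of representatives.\<close>

definition Cinf :: "('a::topological_space \<Rightarrow> ereal) set" where
  "Cinf = {X. continuous_on UNIV X \<and> nowhere_dense {\<omega>. \<bar>X \<omega>\<bar> = \<infinity>}}"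

definition finite_at :: "('a \<Rightarrow> ereal) \<Rightarrow> 'a \<Rightarrow> bool" where
  "finite_at X \<omega> \<longleftrightarrow> \<bar>X \<omega>\<bar> \<noteq> \<infinity>"

text \<open>Vector space operations of C^infty(K): unique continuous extension from the open dense
  set where the arguments are finite.\<close>

definition cinf_plus :: "('a::topological_space \<Rightarrow> ereal) \<Rightarrow> ('a \<Rightarrow> ereal) \<Rightarrow> ('a \<Rightarrow> ereal)" where
  "cinf_plus X Y = (THE Z. Z \<in> Cinf \<and>
      (\<forall>\<omega>. finite_at X \<omega> \<and> finite_at Y \<omega> \<longrightarrow> Z \<omega> = X \<omega> + Y \<omega>))"

definition cinf_minus :: "('a::topological_space \<Rightarrow> ereal) \<Rightarrow> ('a \<Rightarrow> ereal) \<Rightarrow> ('a \<Rightarrow> ereal)" where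
  "cinf_minus X Y = (THE Z. Z \<in> Cinf \<and>
      (\<forall>\<omega>. finite_at X \<omega> \<and> finite_at Y \<omega> \<longrightarrow> Z \<omega> = X \<omega> - Y \<omega>))"

definition cinf_scale :: "real \<Rightarrow> ('a::topological_space \<Rightarrow> ereal) \<Rightarrow> ('a \<Rightarrow> ereal)" where
  "cinf_scale c X = (THE Z. Z \<in> Cinf \<and>
      (\<forall>\<omega>. finite_at X \<omega> \<longrightarrow> Z \<omega> = ereal c * X \<omega>))"

definition cinf_comp :: "(real \<Rightarrow> real) \<Rightarrow> ('a::topological_space \<Rightarrow> ereal) \<Rightarrow> ('a \<Rightarrow> ereal)" where
  "cinf_comp f X = (THE Z. Z \<in> Cinf \<and>
      (\<forall>\<omega>. finite_at X \<omega> \<longrightarrow> Z \<omega> = ereal (f (real_of_ereal (X \<omega>)))))"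

definition cinf_abs :: "('a \<Rightarrow> ereal) \<Rightarrow> ('a \<Rightarrow> ereal)" where
  "cinf_abs X = (\<lambda>\<omega>. \<bar>X \<omega>\<bar>)"

definition cinf_zero :: "'a \<Rightarrow> ereal" where
  "cinf_zero = (\<lambda>_. 0)"

definition cinf_one :: "'a \<Rightarrow> ereal" where
  "cinf_one = (\<lambda>_. 1)"

text \<open>Order convergence of a sequence in the sublattice L (with order and infima taken in L):
  there is a net z_alpha decreasing to 0 in L (modelled as a downward directed subset D of L
  with infimum 0 in L, indexed by itself) dominating |y_n - y| eventually for each alpha.\<close>

definition oconv :: "('a::topological_space \<Rightarrow> ereal) set \<Rightarrow> (nat \<Rightarrow> 'a \<Rightarrow> ereal) \<Rightarrow> ('a \<Rightarrow> ereal) \<Rightarrow> bool" where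
  "oconv L ys y \<longleftrightarrow> (\<exists>D. D \<subseteq> L \<and> D \<noteq> {} \<and>
      (\<forall>a\<in>D. \<forall>b\<in>D. \<exists>c\<in>D. c \<le> a \<and> c \<le> b) \<and>
      (\<forall>z\<in>D. cinf_zero \<le> z) \<and>
      (\<forall>w\<in>L. (\<forall>z\<in>D. w \<le> z) \<longrightarrow> w \<le> cinf_zero) \<and>
      (\<forall>z\<in>D. \<exists>N. \<forall>n\<ge>N. cinf_abs (cinf_minus (ys n) y) \<le> z))"

definition uo_conv :: "('a::topological_space \<Rightarrow> ereal) set \<Rightarrow> (nat \<Rightarrow> 'a \<Rightarrow> ereal) \<Rightarrow> ('a \<Rightarrow> ereal) \<Rightarrow> bool" where
  "uo_conv L ys y \<longleftrightarrow> (\<forall>u\<in>L. cinf_zero \<le> u \<longrightarrow>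
      oconv L (\<lambda>n. inf (cinf_abs (cinf_minus (ys n) y)) u) cinf_zero)"

definition cinf_ideal :: "('a::topological_space \<Rightarrow> ereal) set \<Rightarrow> bool" where
  "cinf_ideal E \<longleftrightarrow> E \<subseteq> Cinf \<and> cinf_zero \<in> E \<and>
     (\<forall>X\<in>E. \<forall>Y\<in>E. cinf_plus X Y \<in> E) \<and>
     (\<forall>c. \<forall>X\<in>E. cinf_scale c X \<in> E) \<and>
     (\<forall>X\<in>E. \<forall>Y\<in>Cinf. cinf_abs Y \<le> cinf_abs X \<longrightarrow> Y \<in> E)"

definition order_dense_in_cinf :: "('a::topological_space \<Rightarrow> ereal) set \<Rightarrow> bool" where
  "order_dense_in_cinf E \<longleftrightarrow>
     (\<forall>Y\<in>Cinf. cinf_zero < Y \<longrightarrow> (\<exists>X\<in>E. cinf_zero < X \<and> X \<le> Y))"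

end

theory Submission
  imports Defs
begin

text \<open>In the Maeda--Ogasawara picture, uo-convergence is pointwise convergence off a meager
  subset of the Stone space \<open>K\<close>. Testing uo-convergence of \<open>x\<^sub>n\<close> to \<open>x\<close> against the unit gives
  \<open>|x\<^sub>n - x| \<and> 1 \<rightarrow> 0\<close> in order in \<open>E\<close>; since indicators of closures of open sets are continuous
  on the extremally disconnected space \<open>K\<close>, the dominating net cannot stay above \<open>1/(j+1)\<close> on an
  open set, so \<open>x\<^sub>n \<rightarrow> x\<close> pointwise off a countable union of closed nowhere dense sets. Continuity
  of \<open>f\<close> carries this over to \<open>f \<circ> x\<^sub>n \<rightarrow> f \<circ> x\<close>. Conversely, by the Baire category theorem on the
  compact space \<open>K\<close>, pointwise convergence off a meager set of a sequence dominated by \<open>u\<close> is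
  order convergence in \<open>C\<^sup>\<infinity>(K)\<close>.\<close>

section \<open>Meager and nowhere dense sets\<close>

definition meager :: "'a::topological_space set \<Rightarrow> bool" where
  "meager S \<longleftrightarrow> (\<exists>G. countable G \<and> (\<forall>T\<in>G. closed T \<and> interior T = {}) \<and> S \<subseteq> \<Union>G)"

lemma meager_closed: "closed T \<Longrightarrow> interior T = {} \<Longrightarrow> meager T"
  unfolding meager_def by (intro exI[of _ "{T}"]) auto

lemma meager_UN:
  assumes "countable I" "\<And>i. i \<in> I \<Longrightarrow> meager (A i)"
  shows "meager (\<Union>i\<in>I. A i)"
proof -
  obtain G where G: "\<And>i. i \<in> I \<Longrightarrow> countable (G i)"
      "\<And>i. i \<in> I \<Longrightarrow> \<forall>T\<in>G i. closed T \<and> interior T = {}"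
      "\<And>i. i \<in> I \<Longrightarrow> A i \<subseteq> \<Union>(G i)"
    using assms(2) unfolding meager_def by metis
  have "(\<Union>i\<in>I. A i) \<subseteq> \<Union>(\<Union>i\<in>I. G i)"
  proof (rule UN_least)
    fix i assume "i \<in> I"
    then have "\<Union>(G i) \<subseteq> \<Union>(\<Union>i\<in>I. G i)" by (intro Union_mono) blast
    with G(3)[OF \<open>i \<in> I\<close>] show "A i \<subseteq> \<Union>(\<Union>i\<in>I. G i)" by (rule order_trans)
  qed
  then show ?thesis
    unfolding meager_def using assms(1) G(1,2) by (intro exI[of _ "\<Union>i\<in>I. G i"]) auto
qed

lemma meager_Un: "meager S \<Longrightarrow> meager T \<Longrightarrow> meager (S \<union> T)"
  using meager_UN[of "{S, T}" "\<lambda>X. X"] by auto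

lemma interior_meager:
  assumes "compact (UNIV :: 'a::t2_space set)" and "meager (S :: 'a set)"
  shows "interior S = {}"
proof -
  obtain G where G: "countable G" "\<forall>T\<in>G. closed T \<and> interior T = {}" "S \<subseteq> \<Union>G"
    using assms(2) unfolding meager_def by blast
  have cs: "compact_space (euclidean :: 'a topology)"
    using assms(1) by (simp add: compact_space_def)
  have "regular_space (euclidean :: 'a topology)"
    by (rule compact_Hausdorff_imp_regular_space[OF cs])
       (simp add: Hausdorff_space_def disjnt_def, metis hausdorff)
  then have "euclidean interior_of \<Union>G = {}"
    by (intro Baire_category_aux compact_imp_locally_compact_space[OF cs] G(1)) (use G(2) in auto)
  then show ?thesis
    using interior_mono[OF G(3)] by simp
qed

lemma meager_diff_interior: "closed T \<Longrightarrow> meager (T - interior T)"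
proof (rule meager_closed)
  have "interior (T - interior T) \<subseteq> interior T"
    by (intro interior_mono) blast
  with interior_subset[of "T - interior T"] show "interior (T - interior T) = {}"
    by blast
qed (simp add: closed_Diff)

lemma nowhere_dense_subset: "S \<subseteq> T \<Longrightarrow> nowhere_dense T \<Longrightarrow> nowhere_dense S"
  unfolding nowhere_dense_def by (metis closure_mono interior_mono subset_empty)

lemma nowhere_dense_compl_open_dense: "open S \<Longrightarrow> closure S = UNIV \<Longrightarrow> nowhere_dense (- S)"
  unfolding nowhere_dense_def by (simp add: interior_complement open_closed)

lemma continuous_on_eq_dense:
  fixes Z1 Z2 :: "'a::topological_space \<Rightarrow> 'b::t2_space"
  assumes "continuous_on UNIV Z1" "continuous_on UNIV Z2" "closure S = UNIV" "\<forall>w\<in>S. Z1 w = Z2 w"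
  shows "Z1 = Z2"
proof -
  have "closure S \<subseteq> {w. Z1 w = Z2 w}"
    using assms(4) by (intro closure_minimal closed_Collect_eq assms(1,2)) auto
  then show ?thesis using assms(3) by auto
qed

lemma finite_at_iff: "finite_at X w \<longleftrightarrow> -\<infinity> < X w \<and> X w < \<infinity>"
  unfolding finite_at_def by (cases "X w") auto

lemma open_finite_at:
  assumes "continuous_on UNIV X" shows "open {w. finite_at X w}"
proof -
  have "open {w. (\<lambda>_. -\<infinity>) w < X w \<and> X w < (\<lambda>_. \<infinity>) w}"
    by (intro open_Collect_conj open_Collect_less assms continuous_on_const)
  then show ?thesis by (simp add: finite_at_iff)
qed

lemma
  assumes "X \<in> Cinf"
  shows closed_infinite_at: "closed {w. \<not> finite_at X w}"
    and interior_infinite_at: "interior {w. \<not> finite_at X w} = {}"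
proof -
  have "closed (- {w. finite_at X w})" using open_finite_at assms Cinf_def by blast
  then show c: "closed {w. \<not> finite_at X w}" by (simp add: Compl_eq)
  have "nowhere_dense {w. \<bar>X w\<bar> = \<infinity>}" using assms Cinf_def by blast
  then show "interior {w. \<not> finite_at X w} = {}"
    using c unfolding nowhere_dense_def finite_at_def by simp
qed

lemma meager_infinite_at: "X \<in> Cinf \<Longrightarrow> meager {w. \<not> finite_at X w}"
  by (intro meager_closed closed_infinite_at interior_infinite_at)

lemma closure_finite_at2:
  assumes "X \<in> Cinf" "Y \<in> Cinf"
  shows "closure {w. finite_at X w \<and> finite_at Y w} = UNIV"
proof -
  have "interior ({w. \<not> finite_at X w} \<union> {w. \<not> finite_at Y w}) = {}"
    by (simp add: interior_closed_Un_empty_interior closed_infinite_at interior_infinite_at assms)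
  moreover have "{w. \<not> finite_at X w} \<union> {w. \<not> finite_at Y w} = - {w. finite_at X w \<and> finite_at Y w}"
    by auto
  ultimately show ?thesis by (metis closure_complement double_complement Compl_empty_eq)
qed

lemma closure_finite_at: "X \<in> Cinf \<Longrightarrow> closure {w. finite_at X w} = UNIV"
  using closure_finite_at2[of X X] by simp

section \<open>Continuous extension from open sets\<close>

definition upper_envelope :: "'a::topological_space set \<Rightarrow> ('a \<Rightarrow> ereal) \<Rightarrow> 'a \<Rightarrow> ereal" where
  "upper_envelope G g w = (INF U\<in>{U. open U \<and> w \<in> U}. SUP t\<in>U \<inter> G. g t)"

lemma upper_envelope_eq:
  assumes "open G" "continuous_on G g" "t \<in> G"
  shows "upper_envelope G g t = g t"
proof (rule antisym)
  show "upper_envelope G g t \<le> g t"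
  proof (rule dense_ge)
    fix b assume "g t < b"
    define U where "U = g -` {..<b} \<inter> G"
    have U: "open U" "t \<in> U"
      unfolding U_def using \<open>g t < b\<close> assms(3)
      by (auto intro: continuous_on_open_vimage[OF assms(1), THEN iffD1, OF assms(2), rule_format])
    have "upper_envelope G g t \<le> (SUP s\<in>U \<inter> G. g s)"
      unfolding upper_envelope_def using U by (intro INF_lower) auto
    also have "\<dots> \<le> b" by (rule SUP_least) (auto simp: U_def)
    finally show "upper_envelope G g t \<le> b" .
  qed
  show "g t \<le> upper_envelope G g t" unfolding upper_envelope_def
    by (rule INF_greatest) (use assms(3) in \<open>auto intro: SUP_upper\<close>)
qed

lemma upper_envelope_upper_semicontinuous:
  assumes "upper_envelope G g w < b"
  shows "\<forall>\<^sub>F x in at w. upper_envelope G g x < b"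
proof -
  obtain U where U: "open U" "w \<in> U" "(SUP t\<in>U \<inter> G. g t) < b"
    using assms unfolding upper_envelope_def INF_less_iff by blast
  have "upper_envelope G g x < b" if "x \<in> U" for x
  proof -
    have "upper_envelope G g x \<le> (SUP t\<in>U \<inter> G. g t)"
      unfolding upper_envelope_def using U that by (intro INF_lower) auto
    then show ?thesis using U by simp
  qed
  then show ?thesis
    unfolding eventually_at_topological using U by blast
qed

text \<open>Lower semicontinuity is where extremal disconnectedness enters: the points where the
  envelope exceeds a level form the closure of an open set, which is open.\<close>

lemma upper_envelope_lower_semicontinuous:
  fixes g :: "'a::t2_space \<Rightarrow> ereal"
  assumes "extremally_disconnected TYPE('a)" "open G" "continuous_on G g"
    and "a < upper_envelope G g w"
  shows "\<forall>\<^sub>F x in at w. a < upper_envelope G g x"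
proof -
  obtain a' where a': "a < a'" "a' < upper_envelope G g w"
    using assms(4) dense by blast
  define A where "A = g -` {a'<..} \<inter> G"
  have "open A"
    unfolding A_def
    by (intro continuous_on_open_vimage[OF assms(2), THEN iffD1, OF assms(3), rule_format]) simp
  then have open_clA: "open (closure A)"
    using assms(1) unfolding extremally_disconnected_def by blast
  have "w \<in> closure A"
  proof (rule ccontr)
    assume w: "w \<notin> closure A"
    have "upper_envelope G g w \<le> (SUP t\<in>(- closure A) \<inter> G. g t)"
      unfolding upper_envelope_def using w by (intro INF_lower) auto
    also have "\<dots> \<le> a'"
    proof (rule SUP_least)
      fix t assume "t \<in> - closure A \<inter> G"
      then have "t \<notin> A" "t \<in> G" using closure_subset by auto
      then show "g t \<le> a'" by (simp add: A_def not_less)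
    qed
    finally show False using a' by simp
  qed
  moreover have "a' \<le> upper_envelope G g x" if "x \<in> closure A" for x
    unfolding upper_envelope_def
  proof (rule INF_greatest)
    fix U assume "U \<in> {U. open U \<and> x \<in> U}"
    then have "U \<inter> A \<noteq> {}"
      using that open_Int_closure_eq_empty by blast
    then obtain t where "t \<in> U" "t \<in> A" by blast
    then have "a' < g t" "t \<in> U \<inter> G" unfolding A_def by auto
    then show "a' \<le> (SUP t\<in>U \<inter> G. g t)"
      by (meson SUP_upper less_imp_le order_trans)
  qed
  then have "\<forall>x\<in>closure A. a < upper_envelope G g x"
    using a'(1) less_le_trans by blast
  ultimately show ?thesis
    unfolding eventually_at_topological using open_clA by blast
qed

lemma continuous_on_upper_envelope:
  fixes g :: "'a::t2_space \<Rightarrow> ereal"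
  assumes "extremally_disconnected TYPE('a)" "open G" "continuous_on G g"
  shows "continuous_on UNIV (upper_envelope G g)"
proof -
  have "isCont (upper_envelope G g) w" for w
    unfolding continuous_at
    by (intro order_tendstoI upper_envelope_upper_semicontinuous upper_envelope_lower_semicontinuous[OF assms])
  then show ?thesis by (simp add: continuous_at_imp_continuous_on)
qed

text \<open>The \<open>THE\<close>-definitions of the operations of \<open>C\<^sup>\<infinity>(K)\<close> are not junk: the upper envelope
  provides an element and density of the set of finiteness makes it unique.\<close>

lemma Cinf_THE:
  fixes Q :: "'a::t2_space \<Rightarrow> bool" and v :: "'a \<Rightarrow> ereal"
  assumes "extremally_disconnected TYPE('a)" "open {w. Q w}" "closure {w. Q w} = UNIV"
    and "continuous_on {w. Q w} v" "\<And>w. Q w \<Longrightarrow> \<bar>v w\<bar> \<noteq> \<infinity>"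
  defines "Z \<equiv> THE Z. Z \<in> Cinf \<and> (\<forall>w. Q w \<longrightarrow> Z w = v w)"
  shows "Z \<in> Cinf" and "\<And>w. Q w \<Longrightarrow> Z w = v w"
proof -
  let ?H = "upper_envelope {w. Q w} v"
  have H: "continuous_on UNIV ?H" "\<And>w. Q w \<Longrightarrow> ?H w = v w"
    using continuous_on_upper_envelope[OF assms(1,2,4)] upper_envelope_eq[OF assms(2,4)] by auto
  have "{w. \<bar>?H w\<bar> = \<infinity>} \<subseteq> - {w. Q w}"
  proof
    fix w assume "w \<in> {w. \<bar>?H w\<bar> = \<infinity>}"
    then show "w \<in> - {w. Q w}"
      using H(2)[of w] assms(5)[of w] by (cases "Q w") simp_all
  qed
  then have "nowhere_dense {w. \<bar>?H w\<bar> = \<infinity>}"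
    by (rule nowhere_dense_subset) (rule nowhere_dense_compl_open_dense[OF assms(2,3)])
  with H(1) have "?H \<in> Cinf" by (simp add: Cinf_def)
  have "\<exists>!Z. Z \<in> Cinf \<and> (\<forall>w. Q w \<longrightarrow> Z w = v w)"
  proof (rule ex1I[of _ ?H])
    show "?H \<in> Cinf \<and> (\<forall>w. Q w \<longrightarrow> ?H w = v w)" using \<open>?H \<in> Cinf\<close> H(2) by simp
    fix Z' assume Z': "Z' \<in> Cinf \<and> (\<forall>w. Q w \<longrightarrow> Z' w = v w)"
    show "Z' = ?H"
    proof (rule continuous_on_eq_dense[OF _ H(1) assms(3)])
      show "continuous_on UNIV Z'" using Z' by (simp add: Cinf_def)
      show "\<forall>w\<in>{w. Q w}. Z' w = ?H w" using Z' H(2) by simp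
    qed
  qed
  from theI'[OF this] show "Z \<in> Cinf" "\<And>w. Q w \<Longrightarrow> Z w = v w"
    unfolding Z_def by simp_all
qed

lemma continuous_on_real_of_ereal_finite_at:
  fixes X :: "'a::t2_space \<Rightarrow> ereal"
  assumes "X \<in> Cinf"
  shows "continuous_on {w. finite_at X w} (\<lambda>w. real_of_ereal (X w))"
proof -
  have "isCont (\<lambda>w. real_of_ereal (X w)) w" if "finite_at X w" for w
  proof -
    have "isCont X w" using assms by (simp add: Cinf_def continuous_on_eq_continuous_at)
    moreover have "isCont real_of_ereal (X w)"
      using that by (intro continuous_at_of_ereal) (simp add: finite_at_def)
    ultimately show ?thesis
      by (rule isCont_o2)
  qed
  then show ?thesis by (intro continuous_at_imp_continuous_on ballI) simp
qed

lemma cinf_minus_spec: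
  fixes X Y :: "'a::t2_space \<Rightarrow> ereal"
  assumes "extremally_disconnected TYPE('a)" "X \<in> Cinf" "Y \<in> Cinf"
  shows "cinf_minus X Y \<in> Cinf"
    and "\<And>w. finite_at X w \<Longrightarrow> finite_at Y w \<Longrightarrow> cinf_minus X Y w = X w - Y w"
proof -
  let ?S = "{w. finite_at X w \<and> finite_at Y w}"
  have "open ?S"
    using open_finite_at assms(2,3) by (auto simp: Cinf_def Collect_conj_eq)
  moreover have "continuous_on ?S (\<lambda>w. ereal (real_of_ereal (X w) - real_of_ereal (Y w)))"
    by (intro continuous_intros continuous_on_subset[OF continuous_on_real_of_ereal_finite_at[OF assms(2)]]
        continuous_on_subset[OF continuous_on_real_of_ereal_finite_at[OF assms(3)]]) auto
  then have "continuous_on ?S (\<lambda>w. X w - Y w)"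
    by (rule continuous_on_cong[THEN iffD1, rotated 2]) (auto simp: finite_at_def ereal_real)
  moreover have "\<And>w. finite_at X w \<and> finite_at Y w \<Longrightarrow> \<bar>X w - Y w\<bar> \<noteq> \<infinity>"
    by (auto simp: finite_at_def)
  ultimately show "cinf_minus X Y \<in> Cinf"
    and "\<And>w. finite_at X w \<Longrightarrow> finite_at Y w \<Longrightarrow> cinf_minus X Y w = X w - Y w"
    unfolding cinf_minus_def
    using Cinf_THE[OF assms(1) _ closure_finite_at2[OF assms(2,3)]] by auto
qed

lemma cinf_comp_spec:
  fixes X :: "'a::t2_space \<Rightarrow> ereal"
  assumes "extremally_disconnected TYPE('a)" "X \<in> Cinf" "continuous_on UNIV f"
  shows "cinf_comp f X \<in> Cinf"
    and "\<And>w. finite_at X w \<Longrightarrow> cinf_comp f X w = ereal (f (real_of_ereal (X w)))"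
proof -
  have "open {w. finite_at X w}" using open_finite_at assms(2) by (auto simp: Cinf_def)
  moreover have "continuous_on {w. finite_at X w} (\<lambda>w. ereal (f (real_of_ereal (X w))))"
    by (intro continuous_on_ereal continuous_on_compose2[OF assms(3) continuous_on_real_of_ereal_finite_at[OF assms(2)]]) auto
  ultimately show "cinf_comp f X \<in> Cinf"
    and "\<And>w. finite_at X w \<Longrightarrow> cinf_comp f X w = ereal (f (real_of_ereal (X w)))"
    unfolding cinf_comp_def
    using Cinf_THE[OF assms(1) _ closure_finite_at[OF assms(2)]] by auto
qed

lemma cinf_minus_zero:
  assumes "Y \<in> Cinf" shows "cinf_minus Y cinf_zero = Y"
  unfolding cinf_minus_def
proof (rule the_equality)
  fix Z assume Z: "Z \<in> Cinf \<and> (\<forall>w. finite_at Y w \<and> finite_at cinf_zero w \<longrightarrow> Z w = Y w - cinf_zero w)"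
  show "Z = Y"
    by (rule continuous_on_eq_dense[OF _ _ closure_finite_at[OF assms]])
       (use Z assms in \<open>auto simp: Cinf_def cinf_zero_def finite_at_def\<close>)
qed (use assms in \<open>auto simp: cinf_zero_def\<close>)

lemma Cinf_bounded:
  "continuous_on UNIV X \<Longrightarrow> (\<And>w. \<bar>X w\<bar> \<noteq> \<infinity>) \<Longrightarrow> X \<in> Cinf"
  by (simp add: Cinf_def nowhere_dense_def)

lemma Cinf_zero: "cinf_zero \<in> Cinf"
  and Cinf_one: "cinf_one \<in> Cinf"
  by (auto intro: Cinf_bounded simp: cinf_zero_def cinf_one_def)

lemma Cinf_abs: "X \<in> Cinf \<Longrightarrow> cinf_abs X \<in> Cinf"
  unfolding Cinf_def cinf_abs_def by (auto intro: continuous_intros)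

lemma Cinf_inf:
  assumes "X \<in> Cinf" "Y \<in> Cinf" shows "inf X Y \<in> Cinf"
proof -
  have "continuous_on UNIV (\<lambda>w. min (X w) (Y w))"
    using assms by (intro continuous_intros) (auto simp: Cinf_def)
  moreover have "{w. \<bar>min (X w) (Y w)\<bar> = \<infinity>} \<subseteq> {w. \<not> finite_at X w} \<union> {w. \<not> finite_at Y w}"
    by (auto simp: finite_at_def min_def)
  moreover have "nowhere_dense ({w. \<not> finite_at X w} \<union> {w. \<not> finite_at Y w})"
    using assms unfolding nowhere_dense_def
    by (simp add: closed_infinite_at interior_infinite_at interior_closed_Un_empty_interior)
  ultimately show ?thesis
    using nowhere_dense_subset by (auto simp: Cinf_def inf_fun_def inf_min)
qed

lemma Cinf_patch_clopen:
  fixes u :: "'a::topological_space \<Rightarrow> ereal"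
  assumes "extremally_disconnected TYPE('a)" "open W" "u \<in> Cinf"
  shows "(\<lambda>p. if p \<in> closure W then ereal c else u p) \<in> Cinf"
proof -
  have "open (closure W)" using assms(1,2) unfolding extremally_disconnected_def by blast
  then have "continuous_on (closure W \<union> - closure W) (\<lambda>p. if p \<in> closure W then ereal c else u p)"
    using assms(3) by (intro continuous_on_cases) (auto simp: Cinf_def intro: continuous_on_subset)
  moreover have "nowhere_dense {p. \<bar>if p \<in> closure W then ereal c else u p\<bar> = \<infinity>}"
    by (rule nowhere_dense_subset[of _ "{p. \<bar>u p\<bar> = \<infinity>}"]) (use assms(3) in \<open>auto simp: Cinf_def\<close>)
  ultimately show ?thesis
    unfolding Cinf_def by simp
qed

section \<open>Order convergence and convergence off meager sets\<close>

lemma closed_Collect_ball_le: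
  fixes a b :: "'i \<Rightarrow> 'a::topological_space \<Rightarrow> 'b::linorder_topology"
  assumes "\<And>i. i \<in> I \<Longrightarrow> continuous_on UNIV (a i)" "\<And>i. i \<in> I \<Longrightarrow> continuous_on UNIV (b i)"
  shows "closed {p. \<forall>i\<in>I. a i p \<le> b i p}"
proof -
  have "closed (\<Inter>i\<in>I. {p. a i p \<le> b i p})"
    using assms by (intro closed_INT ballI closed_Collect_le)
  moreover have "{p. \<forall>i\<in>I. a i p \<le> b i p} = (\<Inter>i\<in>I. {p. a i p \<le> b i p})"
    by auto
  ultimately show ?thesis by simp
qed

lemma closed_uniform_lower_bound:
  "D \<subseteq> Cinf \<Longrightarrow> closed {p. \<forall>z\<in>D. ereal c \<le> z p}"
  using closed_Collect_ball_le[of D "\<lambda>_ _. ereal c" "\<lambda>z. z"] by (auto simp: Cinf_def)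

text \<open>If some level set of the lower bounds of \<open>D\<close> had interior, the indicator of its (open)
  closure would be a positive lower bound of \<open>D\<close> inside the ideal generated by \<open>1\<close>.\<close>

lemma interior_uniform_lower_bound:
  fixes D E :: "('a::t2_space \<Rightarrow> ereal) set"
  assumes extr: "extremally_disconnected TYPE('a)"
    and E: "cinf_ideal E" "cinf_one \<in> E" and D: "D \<subseteq> E" "\<forall>z\<in>D. cinf_zero \<le> z"
    and Inf_D: "\<forall>w\<in>E. (\<forall>z\<in>D. w \<le> z) \<longrightarrow> w \<le> cinf_zero"
    and "0 < e"
  shows "interior {p. \<forall>z\<in>D. ereal e \<le> z p} = {}"
proof -
  define e' where "e' = min e 1"
  have e': "0 < e'" "e' \<le> 1" "e' \<le> e" using \<open>0 < e\<close> by (auto simp: e'_def)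
  define V where "V = interior {p. \<forall>z\<in>D. ereal e' \<le> z p}"
  have "interior {p. \<forall>z\<in>D. ereal e \<le> z p} \<subseteq> V"
    unfolding V_def using e'(3) by (intro interior_mono) (auto elim!: order.trans[rotated])
  moreover have "V = {}"
  proof (rule ccontr)
    assume "V \<noteq> {}"
    then obtain p0 where p0: "p0 \<in> closure V" using closure_subset by blast
    have "D \<subseteq> Cinf" using D E(1) by (auto simp: cinf_ideal_def)
    then have clV: "closure V \<subseteq> {p. \<forall>z\<in>D. ereal e' \<le> z p}"
      unfolding V_def by (intro closure_minimal interior_subset closed_uniform_lower_bound)
    define v where "v p = (if p \<in> closure V then ereal e' else cinf_zero p)" for p
    have "v \<in> Cinf"
      unfolding v_def V_def by (intro Cinf_patch_clopen extr Cinf_zero) simp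
    moreover have "cinf_abs v \<le> cinf_abs cinf_one"
      using e' by (auto simp: le_fun_def cinf_abs_def cinf_one_def cinf_zero_def v_def)
    ultimately have "v \<in> E" using E unfolding cinf_ideal_def by blast
    moreover have "v \<le> z" if "z \<in> D" for z
      using clV D(2) that by (auto simp: v_def le_fun_def cinf_zero_def)
    ultimately have "v \<le> cinf_zero" using Inf_D by blast
    then have "v p0 \<le> 0" by (simp add: le_fun_def cinf_zero_def)
    then show False
      using p0 e'(1) by (simp add: v_def)
  qed
  ultimately show ?thesis by blast
qed

lemma oconv_zero_imp_tendsto_off_meager:
  fixes ys :: "nat \<Rightarrow> 'a::t2_space \<Rightarrow> ereal"
  assumes extr: "extremally_disconnected TYPE('a)"
    and E: "cinf_ideal E" "cinf_one \<in> E"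
    and ys: "\<And>n. ys n \<in> Cinf" "oconv E ys cinf_zero"
  obtains M where "meager M" "\<And>p. p \<notin> M \<Longrightarrow> ((\<lambda>n. \<bar>ys n p\<bar>) \<longlongrightarrow> 0) sequentially"
proof -
  obtain D where D: "D \<subseteq> E" "\<forall>z\<in>D. cinf_zero \<le> z"
    and Inf_D: "\<forall>w\<in>E. (\<forall>z\<in>D. w \<le> z) \<longrightarrow> w \<le> cinf_zero"
    and dominated: "\<forall>z\<in>D. \<exists>N. \<forall>n\<ge>N. cinf_abs (ys n) \<le> z"
    using ys(2) unfolding oconv_def cinf_minus_zero[OF ys(1)] by blast
  define M where "M = (\<Union>j::nat. {p. \<forall>z\<in>D. ereal (inverse (Suc j)) \<le> z p})"
  have "meager M"
    unfolding M_def using D E(1)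
    by (intro meager_UN meager_closed closed_uniform_lower_bound interior_uniform_lower_bound[OF extr E D Inf_D])
       (auto simp: cinf_ideal_def)
  moreover have "((\<lambda>n. \<bar>ys n p\<bar>) \<longlongrightarrow> 0) sequentially" if "p \<notin> M" for p
  proof (rule order_tendstoI)
    fix b :: ereal assume "0 < b"
    then obtain r where r: "0 < ereal r" "ereal r < b" using ereal_dense2 by blast
    then obtain j where "inverse (Suc j) < r" using reals_Archimedean by auto
    then have "ereal (inverse (Suc j)) < ereal r" by simp
    then have j: "ereal (inverse (Suc j)) < b" using r(2) by (rule less_trans)
    obtain z where z: "z \<in> D" "z p < ereal (inverse (Suc j))"
      using \<open>p \<notin> M\<close> unfolding M_def by (auto simp: not_le)
    obtain N where N: "\<forall>n\<ge>N. cinf_abs (ys n) \<le> z" using dominated z(1) by blast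
    have "\<bar>ys n p\<bar> < b" if "n \<ge> N" for n
    proof -
      have "\<bar>ys n p\<bar> \<le> z p" using N that by (simp add: cinf_abs_def le_fun_def)
      also have "\<dots> < b" using z(2) j by (rule less_trans)
      finally show ?thesis .
    qed
    then show "\<forall>\<^sub>F n in sequentially. \<bar>ys n p\<bar> < b"
      unfolding eventually_sequentially by blast
  next
    fix a :: ereal assume "a < 0"
    then show "\<forall>\<^sub>F n in sequentially. a < \<bar>ys n p\<bar>"
      using abs_ereal_pos less_le_trans by (intro always_eventually allI) blast
  qed
  ultimately show ?thesis using that by blast
qed

lemma open_meets_interior_of_closed_cover:
  fixes F :: "nat \<Rightarrow> 'a::t2_space set"
  assumes "compact (UNIV :: 'a set)" "open V" "V \<noteq> {}" "meager M"
    and "\<And>k. closed (F k)" "V \<subseteq> M \<union> (\<Union>k. F k)"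
  shows "\<exists>k. interior (F k) \<inter> V \<noteq> {}"
proof (rule ccontr)
  assume no_k: "\<nexists>k. interior (F k) \<inter> V \<noteq> {}"
  let ?N = "M \<union> (\<Union>k. F k - interior (F k))"
  have "V \<subseteq> ?N"
  proof
    fix p assume "p \<in> V"
    then have "p \<notin> interior (F k)" for k using no_k by blast
    with \<open>p \<in> V\<close> assms(6) show "p \<in> ?N" by blast
  qed
  then have "V \<subseteq> interior ?N"
    using assms(2) by (rule interior_maximal)
  moreover have "meager ?N"
    by (intro meager_Un assms(4) meager_UN meager_diff_interior assms(5)) auto
  ultimately show False
    using interior_meager[OF assms(1)] assms(3) by simp
qed

text \<open>If \<open>w > e\<close> on an open set \<open>V\<close>, the closed sets where the tail of \<open>g\<close> stays below \<open>e/2\<close>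
  cover \<open>V\<close> up to a meager set, so one of them has interior \<open>W\<close> meeting \<open>V\<close>; patching \<open>u\<close> to \<open>e/2\<close>
  on the clopen set \<open>closure W\<close> gives an eventual majorant that is smaller than \<open>w\<close> there.\<close>

lemma le_eventual_majorants_imp_nonpos:
  fixes g :: "nat \<Rightarrow> 'a::t2_space \<Rightarrow> ereal"
  assumes compact: "compact (UNIV :: 'a set)" and extr: "extremally_disconnected TYPE('a)"
    and u: "u \<in> Cinf" "cinf_zero \<le> u" and g: "\<And>n. g n \<in> Cinf" "\<And>n. g n \<le> u"
    and M: "meager M" "\<And>p. p \<notin> M \<Longrightarrow> ((\<lambda>n. g n p) \<longlongrightarrow> 0) sequentially"
    and w: "w \<in> Cinf" "\<And>z. z \<in> Cinf \<Longrightarrow> cinf_zero \<le> z \<Longrightarrow> \<exists>N. \<forall>n\<ge>N. g n \<le> z \<Longrightarrow> w \<le> z"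
  shows "w \<le> cinf_zero"
proof (rule ccontr)
  assume "\<not> w \<le> cinf_zero"
  then obtain p0 where "0 < w p0" by (auto simp: le_fun_def cinf_zero_def not_le)
  then obtain e where "0 < ereal e" "ereal e < w p0"
    using ereal_dense2 by blast
  then have e: "0 < e" "ereal e < w p0" by simp_all
  define V where "V = {p. (\<lambda>_. ereal e) p < w p}"
  have "open V"
    unfolding V_def using w(1) by (intro open_Collect_less continuous_on_const) (auto simp: Cinf_def)
  define F where "F k = {p. \<forall>n\<in>{k..}. g n p \<le> ereal (e/2)}" for k
  have closed_F: "closed (F k)" for k
    unfolding F_def using g(1) by (intro closed_Collect_ball_le continuous_on_const) (auto simp: Cinf_def)
  have V_cover: "V \<subseteq> M \<union> (\<Union>k. F k)"
  proof
    fix p assume "p \<in> V"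
    show "p \<in> M \<union> (\<Union>k. F k)"
    proof (cases "p \<in> M")
      case False
      then have "\<forall>\<^sub>F n in sequentially. g n p < ereal (e/2)"
        using M(2) e(1) by (intro order_tendstoD) auto
      then obtain k where "\<forall>n\<ge>k. g n p < ereal (e/2)"
        unfolding eventually_sequentially by blast
      then have "p \<in> F k" unfolding F_def by (simp add: less_imp_le)
      then show ?thesis by (intro UnI2 UN_I[OF UNIV_I])
    qed simp
  qed
  have "V \<noteq> {}" using e(2) by (auto simp: V_def)
  with open_meets_interior_of_closed_cover[OF compact \<open>open V\<close> _ M(1) closed_F V_cover]
  obtain k p where p: "p \<in> interior (F k)" "p \<in> V" by blast
  define W where "W = interior (F k) \<inter> V"
  have "closure W \<subseteq> F k"
    unfolding W_def using interior_subset[of "F k"] by (intro closure_minimal closed_F) auto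
  define z where "z q = (if q \<in> closure W then ereal (e/2) else u q)" for q
  have "z \<in> Cinf"
    unfolding z_def W_def using \<open>open V\<close> by (intro Cinf_patch_clopen extr u(1)) auto
  moreover have "cinf_zero \<le> z"
    using u(2) e(1) by (auto simp: z_def le_fun_def cinf_zero_def)
  moreover have "\<forall>n\<ge>k. g n \<le> z"
    using g(2) \<open>closure W \<subseteq> F k\<close> by (auto simp: z_def le_fun_def F_def)
  ultimately have "w \<le> z" using w(2) by blast
  then have "w p \<le> z p" by (rule le_funD)
  moreover have "p \<in> closure W"
    using p unfolding W_def by (intro closure_subset[THEN subsetD] IntI)
  ultimately have "w p \<le> ereal (e/2)" by (simp add: z_def)
  moreover have "ereal (e/2) < w p"
    using p(2) e(1) less_trans[of "ereal (e/2)" "ereal e" "w p"] by (simp add: V_def)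
  ultimately show False by simp
qed

lemma tendsto_off_meager_imp_oconv:
  fixes g :: "nat \<Rightarrow> 'a::t2_space \<Rightarrow> ereal"
  assumes compact: "compact (UNIV :: 'a set)" and extr: "extremally_disconnected TYPE('a)"
    and u: "u \<in> Cinf" "cinf_zero \<le> u"
    and g: "\<And>n. g n \<in> Cinf" "\<And>n. cinf_zero \<le> g n" "\<And>n. g n \<le> u"
    and M: "meager M" "\<And>p. p \<notin> M \<Longrightarrow> ((\<lambda>n. g n p) \<longlongrightarrow> 0) sequentially"
  shows "oconv Cinf g cinf_zero"
proof -
  define D where "D = {z \<in> Cinf. cinf_zero \<le> z \<and> (\<exists>N. \<forall>n\<ge>N. g n \<le> z)}"
  have "cinf_abs (cinf_minus (g n) cinf_zero) = g n" for n
    unfolding cinf_minus_zero[OF g(1)] using g(2)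
    by (auto simp: cinf_abs_def le_fun_def cinf_zero_def)
  moreover have "u \<in> D" using u g(3) unfolding D_def by auto
  moreover have "\<exists>c\<in>D. c \<le> a \<and> c \<le> b" if a: "a \<in> D" and b: "b \<in> D" for a b
  proof (intro bexI[of _ "inf a b"])
    obtain Na where "\<forall>n\<ge>Na. g n \<le> a" using a unfolding D_def by blast
    moreover obtain Nb where "\<forall>n\<ge>Nb. g n \<le> b" using b unfolding D_def by blast
    ultimately have "\<forall>n\<ge>max Na Nb. g n \<le> inf a b" by simp
    then show "inf a b \<in> D"
      using a b Cinf_inf unfolding D_def by (intro CollectI conjI exI[of _ "max Na Nb"]) auto
  qed simp_all
  moreover have "w \<le> cinf_zero" if "w \<in> Cinf" "\<forall>z\<in>D. w \<le> z" for w
    by (rule le_eventual_majorants_imp_nonpos[OF compact extr u g(1,3) M that(1)])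
       (use that(2) in \<open>auto simp: D_def\<close>)
  ultimately show ?thesis
    unfolding oconv_def by (intro exI[of _ D]) (auto simp: D_def)
qed

lemma cinf_minus_finite_at_real:
  fixes X Y :: "'a::t2_space \<Rightarrow> ereal"
  assumes "extremally_disconnected TYPE('a)" "X \<in> Cinf" "Y \<in> Cinf" "finite_at X p" "finite_at Y p"
  shows "cinf_minus X Y p = ereal (real_of_ereal (X p) - real_of_ereal (Y p))"
  using cinf_minus_spec(2)[OF assms] assms(4,5) by (auto simp: finite_at_def ereal_real)

lemma LIMSEQ_of_min_abs_one:
  fixes r :: "nat \<Rightarrow> real"
  assumes "(\<lambda>n. min (ereal \<bar>r n\<bar>) 1) \<longlonglongrightarrow> 0"
  shows "r \<longlonglongrightarrow> 0"
proof -
  have "(\<lambda>n. min (ereal \<bar>r n\<bar>) 1) = (\<lambda>n. ereal (min \<bar>r n\<bar> 1))"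
    by (auto simp: min_def)
  with assms have "(\<lambda>n. ereal (min \<bar>r n\<bar> 1)) \<longlonglongrightarrow> ereal 0"
    by (simp add: zero_ereal_def)
  then have lim: "(\<lambda>n. min \<bar>r n\<bar> 1) \<longlonglongrightarrow> 0" by (simp only: lim_ereal)
  then have "\<forall>\<^sub>F n in sequentially. min \<bar>r n\<bar> 1 < 1" by (rule order_tendstoD) simp
  then have "\<forall>\<^sub>F n in sequentially. min \<bar>r n\<bar> 1 = \<bar>r n\<bar>"
    by (rule eventually_mono) (auto simp: min_def split: if_splits)
  from Lim_transform_eventually[OF lim this] show ?thesis
    by (simp add: tendsto_rabs_zero_iff)
qed

lemma uo_conv_imp_tendsto_off_meager:
  fixes xs :: "nat \<Rightarrow> 'a::t2_space \<Rightarrow> ereal"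
  assumes extr: "extremally_disconnected TYPE('a)"
    and E: "cinf_ideal E" "cinf_one \<in> E"
    and xs: "\<And>n. xs n \<in> E" and x: "x \<in> E" and uo: "uo_conv E xs x"
  obtains M where "meager M"
    and "\<And>p n. p \<notin> M \<Longrightarrow> finite_at (xs n) p" "\<And>p. p \<notin> M \<Longrightarrow> finite_at x p"
    and "\<And>p. p \<notin> M \<Longrightarrow> (\<lambda>n. real_of_ereal (xs n p)) \<longlonglongrightarrow> real_of_ereal (x p)"
proof -
  have xsC: "xs n \<in> Cinf" for n
    using E(1) xs by (auto simp: cinf_ideal_def)
  have xC: "x \<in> Cinf"
    using E(1) x by (auto simp: cinf_ideal_def)
  define Y where "Y n = inf (cinf_abs (cinf_minus (xs n) x)) cinf_one" for n
  have "Y n \<in> Cinf" for n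
    unfolding Y_def by (intro Cinf_inf Cinf_abs Cinf_one cinf_minus_spec(1)[OF extr xsC xC])
  moreover have "oconv E Y cinf_zero"
    using uo E(2) unfolding uo_conv_def Y_def by (auto simp: cinf_zero_def cinf_one_def le_fun_def)
  ultimately obtain M where M: "meager M" "\<And>p. p \<notin> M \<Longrightarrow> (\<lambda>n. \<bar>Y n p\<bar>) \<longlonglongrightarrow> 0"
    using oconv_zero_imp_tendsto_off_meager[OF extr E] by metis
  define M' where "M' = M \<union> (\<Union>n. {p. \<not> finite_at (xs n) p}) \<union> {p. \<not> finite_at x p}"
  have "meager M'"
    unfolding M'_def by (intro meager_Un meager_UN M(1) meager_infinite_at xsC xC) auto
  moreover have "(\<lambda>n. real_of_ereal (xs n p)) \<longlonglongrightarrow> real_of_ereal (x p)" if "p \<notin> M'" for p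
  proof -
    have "\<bar>Y n p\<bar> = min (ereal \<bar>real_of_ereal (xs n p) - real_of_ereal (x p)\<bar>) 1" for n
      using that cinf_minus_finite_at_real[OF extr xsC xC]
      by (simp add: M'_def Y_def cinf_abs_def cinf_one_def inf_fun_def inf_min)
    moreover have "(\<lambda>n. \<bar>Y n p\<bar>) \<longlonglongrightarrow> 0"
      using M(2) that unfolding M'_def by blast
    ultimately have "(\<lambda>n. real_of_ereal (xs n p) - real_of_ereal (x p)) \<longlonglongrightarrow> 0"
      by (intro LIMSEQ_of_min_abs_one) simp
    then show ?thesis by (rule LIM_zero_cancel)
  qed
  ultimately show ?thesis
    using that unfolding M'_def by blast
qed

lemma tendsto_off_meager_imp_uo_conv:
  fixes ys :: "nat \<Rightarrow> 'a::t2_space \<Rightarrow> ereal"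
  assumes compact: "compact (UNIV :: 'a set)" and extr: "extremally_disconnected TYPE('a)"
    and ys: "\<And>n. ys n \<in> Cinf" and y: "y \<in> Cinf" and "meager M"
    and fin: "\<And>p n. p \<notin> M \<Longrightarrow> finite_at (ys n) p" "\<And>p. p \<notin> M \<Longrightarrow> finite_at y p"
    and lim: "\<And>p. p \<notin> M \<Longrightarrow> (\<lambda>n. real_of_ereal (ys n p)) \<longlonglongrightarrow> real_of_ereal (y p)"
  shows "uo_conv Cinf ys y"
  unfolding uo_conv_def
proof (intro ballI impI)
  fix u :: "'a \<Rightarrow> ereal" assume u: "u \<in> Cinf" "cinf_zero \<le> u"
  let ?g = "\<lambda>n. inf (cinf_abs (cinf_minus (ys n) y)) u"
  show "oconv Cinf ?g cinf_zero"
  proof (rule tendsto_off_meager_imp_oconv[OF compact extr u _ _ _ \<open>meager M\<close>])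
    show "?g n \<in> Cinf" for n
      by (intro Cinf_inf Cinf_abs u(1) cinf_minus_spec(1)[OF extr ys y])
    show "cinf_zero \<le> ?g n" for n
      using u(2) by (simp add: le_fun_def cinf_zero_def cinf_abs_def)
    show "?g n \<le> u" for n by simp
    fix p assume "p \<notin> M"
    then have "(\<lambda>n. ereal \<bar>real_of_ereal (ys n p) - real_of_ereal (y p)\<bar>) \<longlonglongrightarrow> ereal 0"
      using lim by (intro tendsto_ereal tendsto_rabs_zero LIM_zero)
    then have "(\<lambda>n. min (ereal \<bar>real_of_ereal (ys n p) - real_of_ereal (y p)\<bar>) (u p)) \<longlonglongrightarrow> min 0 (u p)"
      by (intro tendsto_min tendsto_const) (simp add: zero_ereal_def)
    moreover have "min 0 (u p) = 0" using u(2) by (simp add: le_fun_def cinf_zero_def)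
    ultimately show "(\<lambda>n. ?g n p) \<longlonglongrightarrow> 0"
      using \<open>p \<notin> M\<close> fin cinf_minus_finite_at_real[OF extr ys y]
      by (simp add: cinf_abs_def inf_fun_def inf_min)
  qed
qed

theorem mainTheorem8:
  fixes E :: "('a::t2_space \<Rightarrow> ereal) set"
    and f :: "real \<Rightarrow> real"
    and xs :: "nat \<Rightarrow> 'a \<Rightarrow> ereal"
    and x :: "'a \<Rightarrow> ereal"
  assumes K_compact: "compact (UNIV :: 'a set)"
    and K_extr: "extremally_disconnected TYPE('a)"
    and E_ideal: "cinf_ideal E"
    and E_dense: "order_dense_in_cinf E"
    and E_unit: "cinf_one \<in> E"
    and f_cont: "continuous_on UNIV f"
    and xs_in: "\<forall>n. xs n \<in> E"
    and x_in: "x \<in> E"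
    and uo: "uo_conv E xs x"
  shows "uo_conv Cinf (\<lambda>n. cinf_comp f (xs n)) (cinf_comp f x)"
proof -
  obtain M where M: "meager M"
    and fin: "\<And>p n. p \<notin> M \<Longrightarrow> finite_at (xs n) p" "\<And>p. p \<notin> M \<Longrightarrow> finite_at x p"
    and lim: "\<And>p. p \<notin> M \<Longrightarrow> (\<lambda>n. real_of_ereal (xs n p)) \<longlonglongrightarrow> real_of_ereal (x p)"
    using uo_conv_imp_tendsto_off_meager[OF K_extr E_ideal E_unit _ x_in uo] xs_in by blast
  have xsC: "xs n \<in> Cinf" for n
    using E_ideal xs_in by (auto simp: cinf_ideal_def)
  have xC: "x \<in> Cinf"
    using E_ideal x_in by (auto simp: cinf_ideal_def)
  note comp = cinf_comp_spec[OF K_extr _ f_cont]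
  show ?thesis
  proof (rule tendsto_off_meager_imp_uo_conv[OF K_compact K_extr comp(1)[OF xsC] comp(1)[OF xC] M])
    fix p assume "p \<notin> M"
    then show "finite_at (cinf_comp f (xs n)) p" "finite_at (cinf_comp f x) p" for n
      using comp(2) xsC xC fin by (simp_all add: finite_at_def)
    have "isCont f (real_of_ereal (x p))"
      using f_cont by (simp add: continuous_on_eq_continuous_at)
    from isCont_tendsto_compose[OF this lim[OF \<open>p \<notin> M\<close>]]
    show "(\<lambda>n. real_of_ereal (cinf_comp f (xs n) p)) \<longlonglongrightarrow> real_of_ereal (cinf_comp f x p)"
      using \<open>p \<notin> M\<close> comp(2) xsC xC fin by simp
  qed
qed

end
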